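(* For every $n\ge4$, the poset $(\mathcal{G}_{\mathsf{cwvg}}(n),\preceq_{\mathsf{MWC}})$ is not a tree; that is, there is a game in $\mathcal{G}_{\mathsf{cwvg}}(n)$ that covers at least two distinct games in this poset.
   Context: Let $N=\{1,\dots,n\}$. A simple game is a function $v:2^N\to\{0,1\}$ (all-losing allowed); a minimal winning coalition is a winning coalition $S$ with $S\setminus\{i\}$ losing for all $i\in S$; $W_{\min,G}$ denotes the set of minimal winning coalitions of $G$. A weighted voting game is a simple game with $q\ge0$, $w_i\ge0$ and $v(S)=1\iff\sum_{i\in S}w_i\ge q$. Write $i\succeq j$ if $v(S\cup\{i\})\ge v(S\cup\{j\})$ for all $S\subseteq N\setminus\{i,j\}$. $\mathcal{G}_{\mathsf{cwvg}}(n)$ is the set of weighted voting games on $N$ with $1\succeq2\succeq\cdots\succeq n$. For $G,G'\in\mathcal{G}_{\mathsf{cwvg}}(n)$, $G\preceq_{\mathsf{MWC}}G'$ iff there is a sequence $G=G_1,\dots,G_k=G'$ ($k\ge1$) in $\mathcal{G}_{\mathsf{cwvg}}(n)$ with $W_{\min,G_i}\subset W_{\min,G_{i+1}}$ and $|W_{\min,G_{i+1}}|=|W_{\min,G_i}|+1$ for all $i<k$. $y$ covers $x$ if $x\preceq y$, $x\ne y$ and no $z\notin\{x,y\}$ satisfies $x\preceq z\preceq y$. The poset (which has a least element) is called a tree if its Hasse diagram is a tree, i.e., every element covers at most one element. *)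

theory Defs
  imports Main Complex_Main
begin

text \<open>A simple game on N = {1..n} is represented by its set of winning coalitions
  (subsets of {1..n}); v(S) = 1 iff S is in the set.\<close>

definition players :: "nat \<Rightarrow> nat set" where
  "players n = {1..n}"

definition weighted_voting_game :: "nat \<Rightarrow> nat set set \<Rightarrow> bool" where
  "weighted_voting_game n G \<longleftrightarrow>
     (\<exists>(q::real) (w::nat \<Rightarrow> real). q \<ge> 0 \<and> (\<forall>i \<in> players n. w i \<ge> 0) \<and>
        G = {S. S \<subseteq> players n \<and> (\<Sum>i\<in>S. w i) \<ge> q})"

definition desir_ge :: "nat \<Rightarrow> nat set set \<Rightarrow> nat \<Rightarrow> nat \<Rightarrow> bool" where
  "desir_ge n G i j \<longleftrightarrow>
     (\<forall>S. S \<subseteq> players n - {i, j} \<longrightarrow> (S \<union> {j} \<in> G \<longrightarrow> S \<union> {i} \<in> G))"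

definition cwvg :: "nat \<Rightarrow> nat set set set" where
  "cwvg n = {G. weighted_voting_game n G \<and> (\<forall>i. 1 \<le> i \<and> i < n \<longrightarrow> desir_ge n G i (i + 1))}"

definition Wmin :: "nat set set \<Rightarrow> nat set set" where
  "Wmin G = {S \<in> G. \<forall>i \<in> S. S - {i} \<notin> G}"

definition mwc_step :: "nat \<Rightarrow> nat set set \<Rightarrow> nat set set \<Rightarrow> bool" where
  "mwc_step n G H \<longleftrightarrow> G \<in> cwvg n \<and> H \<in> cwvg n \<and> Wmin G \<subset> Wmin H
     \<and> card (Wmin H) = card (Wmin G) + 1"

definition mwc_le :: "nat \<Rightarrow> nat set set \<Rightarrow> nat set set \<Rightarrow> bool" where
  "mwc_le n G G' \<longleftrightarrow> G \<in> cwvg n \<and> G' \<in> cwvg n \<and> (mwc_step n)\<^sup>*\<^sup>* G G'"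

definition covers :: "nat \<Rightarrow> nat set set \<Rightarrow> nat set set \<Rightarrow> bool" where
  "covers n y x \<longleftrightarrow> mwc_le n x y \<and> x \<noteq> y \<and>
     \<not> (\<exists>z. z \<noteq> x \<and> z \<noteq> y \<and> mwc_le n x z \<and> mwc_le n z y)"

end

theory Submission
  imports Defs
begin

text \<open>Take the weighted game with weights 3, 2, 2, 1 on the first four players and quota 4;
  its minimal winning coalitions are {1,2}, {1,3}, {1,4} and {2,3}. Dropping either {1,4}
  (weights 1, 1, 1, 0, quota 2) or {2,3} (weights 3, 1, 1, 1, quota 4) again gives a complete
  weighted game. Since a single step of the order adds exactly one minimal winning coalition,
  no game lies strictly between the two ends of a step, so the first game covers both others.\<close>

definition weighted_game :: "nat \<Rightarrow> (nat \<Rightarrow> real) \<Rightarrow> real \<Rightarrow> nat set set" where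
  "weighted_game n w q = {S. S \<subseteq> players n \<and> q \<le> (\<Sum>i\<in>S. w i)}"

lemma finite_players_subset: "S \<subseteq> players n \<Longrightarrow> finite S"
  unfolding players_def using finite_subset by blast

lemma weighted_game_in_cwvg:
  assumes "q \<ge> 0" "\<And>i. i \<in> players n \<Longrightarrow> w i \<ge> 0"
    and "\<And>i. 1 \<le> i \<Longrightarrow> i < n \<Longrightarrow> w (i + 1) \<le> w i"
  shows "weighted_game n w q \<in> cwvg n"
  unfolding cwvg_def
proof (intro CollectI conjI allI impI)
  show "weighted_voting_game n (weighted_game n w q)"
    unfolding weighted_voting_game_def weighted_game_def using assms(1,2) by blast
  fix i assume i: "1 \<le> i \<and> i < n"
  show "desir_ge n (weighted_game n w q) i (i + 1)"
    unfolding desir_ge_def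
  proof (intro allI impI)
    fix S assume S: "S \<subseteq> players n - {i, i + 1}"
      and win: "S \<union> {i + 1} \<in> weighted_game n w q"
    have "finite S" "i \<notin> S" "i + 1 \<notin> S" using S finite_players_subset by blast+
    then have "sum w (S \<union> {i + 1}) \<le> sum w (S \<union> {i})"
      using assms(3) i by simp
    moreover have "i \<in> players n" using i unfolding players_def by simp
    ultimately show "S \<union> {i} \<in> weighted_game n w q"
      using S win unfolding weighted_game_def by auto
  qed
qed

lemma Wmin_weighted_game:
  "Wmin (weighted_game n w q) =
     {S. S \<subseteq> players n \<and> q \<le> sum w S \<and> (\<forall>i\<in>S. sum w S - w i < q)}"
proof -
  have "sum w (S - {i}) = sum w S - w i" if "S \<subseteq> players n" "i \<in> S" for S i
    using that finite_players_subset by (simp add: sum_diff1)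
  then show ?thesis
    unfolding Wmin_def weighted_game_def by (auto simp: not_le)
qed

text \<open>A player of weight zero can be dropped from any winning coalition, so minimal winning
  coalitions live inside the support of the weights.\<close>
lemma Wmin_weighted_game_within:
  assumes "\<And>i. i \<notin> A \<Longrightarrow> w i = 0" "A \<subseteq> players n"
  shows "Wmin (weighted_game n w q) =
     {S \<in> Pow A. q \<le> sum w S \<and> (\<forall>i\<in>S. sum w S - w i < q)}"
  unfolding Wmin_weighted_game using assms by fastforce

text \<open>With these rules the simplifier filters the explicit enumeration that
  \<open>Pow_insert\<close> produces for \<open>Pow {1, 2, 3, 4}\<close>.\<close>
lemma Collect_eq_or_conj:
  "{S. (S = a \<or> R S) \<and> P S} = (if P a then {a} else {}) \<union> {S. R S \<and> P S}"
  "{S. S = a \<and> P S} = (if P a then {a} else {})"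
  by auto

lemma rtranclp_mwc_step_card_less:
  assumes "(mwc_step n)\<^sup>*\<^sup>* G H"
  shows "G = H \<or> card (Wmin G) < card (Wmin H)"
  using assms by (induction rule: rtranclp_induct) (auto simp: mwc_step_def)

lemma mwc_step_imp_covers:
  assumes step: "mwc_step n G H"
  shows "covers n H G"
proof -
  have card_H: "card (Wmin H) = card (Wmin G) + 1"
    using step unfolding mwc_step_def by simp
  have "mwc_le n G H"
    using step unfolding mwc_le_def mwc_step_def by auto
  moreover have "\<not> (mwc_le n G K \<and> mwc_le n K H)" if "K \<noteq> G" "K \<noteq> H" for K
    using that card_H rtranclp_mwc_step_card_less[of n G K] rtranclp_mwc_step_card_less[of n K H]
    unfolding mwc_le_def by auto
  ultimately show ?thesis
    using card_H unfolding covers_def by auto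
qed

definition game_3221 :: "nat \<Rightarrow> nat set set" where
  "game_3221 n = weighted_game n
     (\<lambda>i. if i = 1 then 3 else if i = 2 \<or> i = 3 then 2 else if i = 4 then 1 else 0) 4"

definition game_1110 :: "nat \<Rightarrow> nat set set" where
  "game_1110 n = weighted_game n (\<lambda>i. if i = 1 \<or> i = 2 \<or> i = 3 then 1 else 0) 2"

definition game_3111 :: "nat \<Rightarrow> nat set set" where
  "game_3111 n = weighted_game n
     (\<lambda>i. if i = 1 then 3 else if i = 2 \<or> i = 3 \<or> i = 4 then 1 else 0) 4"

lemma games_in_cwvg:
  "game_3221 n \<in> cwvg n" "game_1110 n \<in> cwvg n" "game_3111 n \<in> cwvg n"
  unfolding game_3221_def game_1110_def game_3111_def
  by (rule weighted_game_in_cwvg; simp)+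

lemma first_four_players: "n \<ge> 4 \<Longrightarrow> {1, 2, 3, 4} \<subseteq> players n"
  unfolding players_def by auto

lemma Wmin_games:
  assumes "n \<ge> 4"
  shows "Wmin (game_3221 n) = {{1,2}, {1,3}, {1,4}, {2,3}}"
    and "Wmin (game_1110 n) = {{1,2}, {1,3}, {2,3}}"
    and "Wmin (game_3111 n) = {{1,2}, {1,3}, {1,4}}"
proof -
  have within: "Wmin (weighted_game n w q) =
      {S \<in> Pow {1, 2, 3, 4}. q \<le> sum w S \<and> (\<forall>i\<in>S. sum w S - w i < q)}"
    if "\<And>i. i \<notin> {1, 2, 3, 4} \<Longrightarrow> w i = 0" for w q
    using Wmin_weighted_game_within[OF that first_four_players[OF assms]] .
  show "Wmin (game_3221 n) = {{1,2}, {1,3}, {1,4}, {2,3}}"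
    unfolding game_3221_def
    by (subst within) (auto simp: Pow_insert Collect_eq_or_conj insert_commute)
  show "Wmin (game_1110 n) = {{1,2}, {1,3}, {2,3}}"
    unfolding game_1110_def
    by (subst within) (auto simp: Pow_insert Collect_eq_or_conj insert_commute)
  show "Wmin (game_3111 n) = {{1,2}, {1,3}, {1,4}}"
    unfolding game_3111_def
    by (subst within) (auto simp: Pow_insert Collect_eq_or_conj insert_commute)
qed

theorem proposition3:
  fixes n :: nat
  assumes "n \<ge> 4"
  shows "\<exists>G \<in> cwvg n. \<exists>x1 x2. x1 \<noteq> x2 \<and> covers n G x1 \<and> covers n G x2"
proof -
  have "mwc_step n (game_1110 n) (game_3221 n)" "mwc_step n (game_3111 n) (game_3221 n)"
    unfolding mwc_step_def Wmin_games[OF assms] using games_in_cwvg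
    by (auto simp: card_insert_if doubleton_eq_iff dest: arg_cong[of _ _ card])
  moreover have "game_1110 n \<noteq> game_3111 n"
  proof
    assume "game_1110 n = game_3111 n"
    then have "{2, 3} \<in> Wmin (game_3111 n)" using Wmin_games(2)[OF assms] by simp
    then show False using Wmin_games(3)[OF assms] by (simp add: doubleton_eq_iff)
  qed
  ultimately show ?thesis
    using games_in_cwvg(1) mwc_step_imp_covers by blast
qed

end
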